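(* Let $G$ be a Polish group and let $B\subseteq G$ be universally measurable. The following are equivalent: (1) there exists a Borel probability measure $\mu$ on $G$ such that $\mu(gBh)=0$ for every $g,h\in G$; (2) there exists a Borel probability measure $\mu$ on $G$ such that $\mu$ has compact support and $\mu(gBh)=0$ for every $g,h\in G$; (3) there exists a Borel measure $\mu$ on $G$ such that $0<\mu(X)<\infty$ for some $\mu$-measurable set $X\subseteq G$ and $\mu(gBh)=0$ for every $g,h\in G$; (4) there exists a Borel measure $\mu$ on $G$ such that $0<\mu(C)<\infty$ for some compact set $C\subseteq G$ and $\mu(gBh)=0$ for every $g,h\in G$.
   Context: A Polish group is a topological group whose topology is separable and completely metrizable. A subset of a Polish space $X$ is universally measurable if it is $\nu$-measurable for every $\sigma$-finite Borel measure $\nu$ on $X$. Measures are outer measures (identified with the complete measure on their measurable sets); for an outer measure $\mu$ on $X$, $A$ is $\mu$-measurable if $\mu(E)=\mu(E\cap A)+\mu(E\setminus A)$ for all $E\subseteq X$; a measure is Borel if every Borel set is measurable for it. *)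

theory Defs
  imports "HOL-Analysis.Analysis"
begin

text \<open>A Polish group is modelled as a type of class
  polish_space (separable, complete metric -- any completely metrizable
  separable topology admits such a metric) and topological_group_add
  (a group, written additively but not necessarily commutative, with
  continuous operation and inversion).\<close>

definition is_outer_measure :: "('a set \<Rightarrow> ennreal) \<Rightarrow> bool" where
  "is_outer_measure \<mu> \<longleftrightarrow>
     \<mu> {} = 0 \<and>
     (\<forall>A B. A \<subseteq> B \<longrightarrow> \<mu> A \<le> \<mu> B) \<and>
     (\<forall>A :: nat \<Rightarrow> 'a set. \<mu> (\<Union>i. A i) \<le> (\<Sum>i. \<mu> (A i)))"

definition om_measurable :: "('a set \<Rightarrow> ennreal) \<Rightarrow> 'a set \<Rightarrow> bool" where
  "om_measurable \<mu> A \<longleftrightarrow> (\<forall>E. \<mu> E = \<mu> (E \<inter> A) + \<mu> (E - A))"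

definition borel_om :: "('a::topological_space set \<Rightarrow> ennreal) \<Rightarrow> bool" where
  "borel_om \<mu> \<longleftrightarrow> is_outer_measure \<mu> \<and> (\<forall>A \<in> sets borel. om_measurable \<mu> A)"

definition sigma_finite_om :: "('a set \<Rightarrow> ennreal) \<Rightarrow> bool" where
  "sigma_finite_om \<mu> \<longleftrightarrow>
     (\<exists>A :: nat \<Rightarrow> 'a set. (\<forall>i. om_measurable \<mu> (A i) \<and> \<mu> (A i) < \<infinity>) \<and> (\<Union>i. A i) = UNIV)"

definition borel_probability_om :: "('a::topological_space set \<Rightarrow> ennreal) \<Rightarrow> bool" where
  "borel_probability_om \<mu> \<longleftrightarrow> borel_om \<mu> \<and> \<mu> UNIV = 1"

definition universally_measurable :: "'a::topological_space set \<Rightarrow> bool" where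
  "universally_measurable B \<longleftrightarrow>
     (\<forall>\<nu>. borel_om \<nu> \<and> sigma_finite_om \<nu> \<longrightarrow> om_measurable \<nu> B)"

definition om_support :: "('a::topological_space set \<Rightarrow> ennreal) \<Rightarrow> 'a set" where
  "om_support \<mu> = {x. \<forall>U. open U \<and> x \<in> U \<longrightarrow> \<mu> U > 0}"

definition two_sided_translate :: "'a::group_add \<Rightarrow> 'a set \<Rightarrow> 'a \<Rightarrow> 'a set" where
  "two_sided_translate g B h = (\<lambda>b. g + b + h) ` B"

end

theory Submission
  imports Defs "HOL-Analysis.Regularity"
begin

text \<open>Normalising the restriction of a Borel measure
  to a set \<open>X\<close> with \<open>0 < \<mu> X < \<infinity>\<close> gives a Borel probability measure with at
  least the null sets of \<open>\<mu>\<close>, supported in \<open>X\<close> when \<open>X\<close> is closed. A Borel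
  probability measure on a Polish space is inner regular, so some compact \<open>K\<close> has
  positive measure; normalising on \<open>K\<close> yields a compactly supported probability
  measure that still annihilates every translate \<open>g B h\<close>.\<close>

lemma outer_measure_space_is_outer_measure:
  assumes "is_outer_measure \<mu>"
  shows "outer_measure_space (Pow UNIV) \<mu>"
  using assms
  unfolding is_outer_measure_def outer_measure_space_def positive_def increasing_def
    countably_subadditive_def
  by auto

lemma measure_space_borel_om:
  fixes \<mu> :: "'a::topological_space set \<Rightarrow> ennreal"
  assumes "borel_om \<mu>"
  shows "measure_space UNIV (sets borel) \<mu>"
proof -
  have "measure_space UNIV (lambda_system UNIV (Pow UNIV) \<mu>) \<mu>"
    using assms
    by (intro sigma_algebra.caratheodory_lemma sigma_algebra_Pow
        outer_measure_space_is_outer_measure) (simp add: borel_om_def)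
  moreover have "sets borel \<subseteq> lambda_system UNIV (Pow UNIV) \<mu>"
  proof
    fix A :: "'a set"
    assume "A \<in> sets borel"
    then have "om_measurable \<mu> A"
      using assms by (simp add: borel_om_def)
    have "\<mu> (A \<inter> E) + \<mu> ((UNIV - A) \<inter> E) = \<mu> E" for E
    proof -
      have "A \<inter> E = E \<inter> A" and "(UNIV - A) \<inter> E = E - A"
        by auto
      then show ?thesis
        using \<open>om_measurable \<mu> A\<close> unfolding om_measurable_def by metis
    qed
    then show "A \<in> lambda_system UNIV (Pow UNIV) \<mu>"
      by (simp add: lambda_system_def)
  qed
  moreover have "sigma_algebra UNIV (sets borel :: 'a set set)"
    using sets.sigma_algebra_axioms[of borel] by simp
  ultimately show ?thesis
    by (metis measure_down)
qed

lemma emeasure_measure_of_borel_om: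
  fixes \<mu> :: "'a::topological_space set \<Rightarrow> ennreal"
  assumes "borel_om \<mu>" and "A \<in> sets borel"
  shows "emeasure (measure_of UNIV (sets borel) \<mu>) A = \<mu> A"
  using measure_space_borel_om[OF assms(1)] assms(2)
  by (intro emeasure_measure_of_sigma) (auto simp: measure_space_def)

lemma borel_om_finite_ex_compact_pos:
  fixes \<mu> :: "'a::{complete_space, second_countable_topology} set \<Rightarrow> ennreal"
  assumes "borel_om \<mu>" and "0 < \<mu> UNIV" and "\<mu> UNIV < \<infinity>"
  shows "\<exists>K. compact K \<and> 0 < \<mu> K"
proof (rule ccontr)
  assume "\<nexists>K. compact K \<and> 0 < \<mu> K"
  then have null: "\<mu> K = 0" if "compact K" for K
    using that by (simp add: not_gr_zero)
  define M where "M = measure_of UNIV (sets borel) \<mu>"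
  have sets_M: "sets M = sets borel"
    using sigma_algebra.sigma_sets_eq[OF sets.sigma_algebra_axioms[of borel]] by (simp add: M_def)
  have emeasure_M: "emeasure M A = \<mu> A" if "A \<in> sets borel" for A
    using emeasure_measure_of_borel_om[OF assms(1) that] by (simp add: M_def)
  have "emeasure M (space M) \<noteq> \<infinity>"
    using assms(3) emeasure_M[of UNIV] by (simp add: M_def)
  then have "emeasure M UNIV = (SUP K \<in> {K. compact K}. emeasure M K)"
    using inner_regular[OF sets_M, of UNIV] by simp
  also have "\<dots> = 0"
    by (intro SUP_eq_const) (auto simp: emeasure_M borel_compact null)
  finally show False
    using assms(2) emeasure_M[of UNIV] by simp
qed

lemma borel_probability_om_ex_compact:
  fixes \<mu> :: "'a::{complete_space, second_countable_topology} set \<Rightarrow> ennreal"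
  assumes "borel_probability_om \<mu>"
  obtains K where "compact K" and "0 < \<mu> K" and "\<mu> K < \<infinity>"
proof -
  have borel: "borel_om \<mu>" and one: "\<mu> UNIV = 1"
    using assms by (simp_all add: borel_probability_om_def)
  obtain K where K: "compact K" "0 < \<mu> K"
    using borel_om_finite_ex_compact_pos[OF borel] one by auto
  have "\<mu> K \<le> \<mu> UNIV"
    using borel by (simp add: borel_om_def is_outer_measure_def)
  then have "\<mu> K < \<infinity>"
    using one by (simp add: le_less_trans)
  with K show ?thesis
    by (rule that)
qed

definition om_normalized_restriction ::
    "('a set \<Rightarrow> ennreal) \<Rightarrow> 'a set \<Rightarrow> 'a set \<Rightarrow> ennreal" where
  "om_normalized_restriction \<mu> X = (\<lambda>A. \<mu> (A \<inter> X) * inverse (\<mu> X))"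

lemma is_outer_measure_om_normalized_restriction:
  assumes "is_outer_measure \<mu>"
  shows "is_outer_measure (om_normalized_restriction \<mu> X)"
  unfolding is_outer_measure_def om_normalized_restriction_def
proof (intro conjI allI impI)
  show "\<mu> ({} \<inter> X) * inverse (\<mu> X) = 0"
    using assms by (simp add: is_outer_measure_def)
next
  fix A C :: "'a set"
  assume "A \<subseteq> C"
  then show "\<mu> (A \<inter> X) * inverse (\<mu> X) \<le> \<mu> (C \<inter> X) * inverse (\<mu> X)"
    using assms Int_mono[OF \<open>A \<subseteq> C\<close> order_refl[of X]]
    by (intro mult_right_mono) (auto simp: is_outer_measure_def)
next
  fix A :: "nat \<Rightarrow> 'a set"
  have "\<mu> (\<Union>i. A i \<inter> X) \<le> (\<Sum>i. \<mu> (A i \<inter> X))"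
    using assms unfolding is_outer_measure_def by (simp only:)
  moreover have "(\<Union>i. A i) \<inter> X = (\<Union>i. A i \<inter> X)"
    by auto
  ultimately have "\<mu> ((\<Union>i. A i) \<inter> X) \<le> (\<Sum>i. \<mu> (A i \<inter> X))"
    by (simp only:)
  then show "\<mu> ((\<Union>i. A i) \<inter> X) * inverse (\<mu> X) \<le> (\<Sum>i. \<mu> (A i \<inter> X) * inverse (\<mu> X))"
    unfolding ennreal_suminf_multc by (rule mult_right_mono) simp
qed

lemma om_measurable_om_normalized_restriction:
  assumes "om_measurable \<mu> A"
  shows "om_measurable (om_normalized_restriction \<mu> X) A"
  unfolding om_measurable_def om_normalized_restriction_def
proof
  fix E
  have "E \<inter> A \<inter> X = E \<inter> X \<inter> A" and "(E - A) \<inter> X = E \<inter> X - A"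
    by auto
  moreover have "\<mu> (E \<inter> X) = \<mu> (E \<inter> X \<inter> A) + \<mu> (E \<inter> X - A)"
    using assms unfolding om_measurable_def by blast
  ultimately show "\<mu> (E \<inter> X) * inverse (\<mu> X)
      = \<mu> (E \<inter> A \<inter> X) * inverse (\<mu> X) + \<mu> ((E - A) \<inter> X) * inverse (\<mu> X)"
    by (simp only: distrib_right)
qed

lemma borel_probability_om_normalized_restriction:
  assumes "borel_om \<mu>" and "0 < \<mu> X" and "\<mu> X < \<infinity>"
  shows "borel_probability_om (om_normalized_restriction \<mu> X)"
proof -
  have "om_normalized_restriction \<mu> X UNIV = 1"
    using assms(2,3)
    by (simp add: om_normalized_restriction_def ennreal_divide_self divide_ennreal_def[symmetric])
  then show ?thesis
    using assms(1)
    by (simp add: borel_probability_om_def borel_om_def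
        is_outer_measure_om_normalized_restriction om_measurable_om_normalized_restriction)
qed

lemma om_normalized_restriction_null:
  assumes "is_outer_measure \<mu>" and "\<mu> A = 0"
  shows "om_normalized_restriction \<mu> X A = 0"
proof -
  have "\<mu> (A \<inter> X) \<le> \<mu> A"
    using assms(1) by (simp add: is_outer_measure_def)
  then show ?thesis
    using assms(2) by (simp add: om_normalized_restriction_def)
qed

lemma closed_om_support: "closed (om_support \<mu>)"
proof -
  have "- om_support \<mu> = \<Union>{U. open U \<and> \<mu> U = 0}"
    by (auto simp: om_support_def not_less)
  then show ?thesis
    unfolding closed_def by auto
qed

lemma om_support_om_normalized_restriction_subset:
  assumes "\<mu> {} = 0" and "closed X"
  shows "om_support (om_normalized_restriction \<mu> X) \<subseteq> X"
  using assms
  by (auto simp: om_support_def om_normalized_restriction_def dest!: spec[of _ "- X"])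

lemma compact_om_support_om_normalized_restriction:
  fixes \<mu> :: "'a::t2_space set \<Rightarrow> ennreal"
  assumes "\<mu> {} = 0" and "compact K"
  shows "compact (om_support (om_normalized_restriction \<mu> K))"
  using compact_Int_closed[OF assms(2) closed_om_support[of "om_normalized_restriction \<mu> K"]]
    om_support_om_normalized_restriction_subset[of \<mu> K, OF assms(1) compact_imp_closed[OF assms(2)]]
  by (simp add: inf.absorb2)

lemma ex_borel_probability_om_abs_cont:
  assumes "borel_om \<mu>" and "0 < \<mu> X" and "\<mu> X < \<infinity>"
  shows "\<exists>\<nu>. borel_probability_om \<nu> \<and> (\<forall>A. \<mu> A = 0 \<longrightarrow> \<nu> A = 0)"
proof -
  have "is_outer_measure \<mu>"
    using assms(1) by (simp add: borel_om_def)
  then show ?thesis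
    using borel_probability_om_normalized_restriction[OF assms] om_normalized_restriction_null
    by blast
qed

lemma ex_compact_support_borel_probability_om_abs_cont:
  fixes \<mu> :: "'a::{complete_space, second_countable_topology} set \<Rightarrow> ennreal"
  assumes "borel_probability_om \<mu>"
  shows "\<exists>\<nu>. borel_probability_om \<nu> \<and> compact (om_support \<nu>) \<and> (\<forall>A. \<mu> A = 0 \<longrightarrow> \<nu> A = 0)"
proof -
  obtain K where K: "compact K" "0 < \<mu> K" "\<mu> K < \<infinity>"
    using assms by (rule borel_probability_om_ex_compact)
  have borel: "borel_om \<mu>" and outer: "is_outer_measure \<mu>"
    using assms by (simp_all add: borel_probability_om_def borel_om_def)
  let ?\<nu> = "om_normalized_restriction \<mu> K"
  have "borel_probability_om ?\<nu>"
    using borel K(2,3) by (rule borel_probability_om_normalized_restriction)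
  moreover have "compact (om_support ?\<nu>)"
    using outer K(1) by (simp add: is_outer_measure_def compact_om_support_om_normalized_restriction)
  moreover have "\<forall>A. \<mu> A = 0 \<longrightarrow> ?\<nu> A = 0"
    using outer by (simp add: om_normalized_restriction_null)
  ultimately show ?thesis
    by blast
qed

theorem theorem4p4:
  fixes B :: "'a::{polish_space, topological_group_add} set"
  assumes "universally_measurable B"
  shows "((\<exists>\<mu>. borel_probability_om \<mu> \<and> (\<forall>g h. \<mu> (two_sided_translate g B h) = 0))
           \<longleftrightarrow> (\<exists>\<mu>. borel_probability_om \<mu> \<and> compact (om_support \<mu>) \<and>
                    (\<forall>g h. \<mu> (two_sided_translate g B h) = 0)))
       \<and> ((\<exists>\<mu>. borel_probability_om \<mu> \<and> (\<forall>g h. \<mu> (two_sided_translate g B h) = 0))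
           \<longleftrightarrow> (\<exists>\<mu>. borel_om \<mu> \<and> (\<exists>X. om_measurable \<mu> X \<and> 0 < \<mu> X \<and> \<mu> X < \<infinity>) \<and>
                    (\<forall>g h. \<mu> (two_sided_translate g B h) = 0)))
       \<and> ((\<exists>\<mu>. borel_probability_om \<mu> \<and> (\<forall>g h. \<mu> (two_sided_translate g B h) = 0))
           \<longleftrightarrow> (\<exists>\<mu>. borel_om \<mu> \<and> (\<exists>C. compact C \<and> 0 < \<mu> C \<and> \<mu> C < \<infinity>) \<and>
                    (\<forall>g h. \<mu> (two_sided_translate g B h) = 0)))"
  (is "(?P1 \<longleftrightarrow> ?P2) \<and> (?P1 \<longleftrightarrow> ?P3) \<and> (?P1 \<longleftrightarrow> ?P4)")
proof -
  let ?null = "\<lambda>\<mu>. \<forall>g h. \<mu> (two_sided_translate g B h) = 0"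
  have P4_imp_P3: "?P3" if "?P4"
  proof -
    obtain \<mu> C where borel: "borel_om \<mu>" and C: "compact C" "0 < \<mu> C" "\<mu> C < \<infinity>"
      and null: "?null \<mu>"
      using \<open>?P4\<close> by blast
    have "om_measurable \<mu> C"
      using borel borel_compact[OF C(1)] by (simp add: borel_om_def)
    with borel C null show ?thesis
      by blast
  qed
  have P3_imp_P1: "?P1" if "?P3"
  proof -
    obtain \<mu> X where "borel_om \<mu>" "0 < \<mu> X" "\<mu> X < \<infinity>" and null: "?null \<mu>"
      using \<open>?P3\<close> by blast
    with ex_borel_probability_om_abs_cont show ?thesis
      by blast
  qed
  have P1_imp_P2: "?P2" if "?P1"
  proof -
    obtain \<mu> where "borel_probability_om \<mu>" and null: "?null \<mu>"
      using \<open>?P1\<close> by blast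
    with ex_compact_support_borel_probability_om_abs_cont show ?thesis
      by blast
  qed
  have P1_imp_P4: "?P4" if "?P1"
  proof -
    obtain \<mu> where prob: "borel_probability_om \<mu>" and null: "?null \<mu>"
      using \<open>?P1\<close> by blast
    obtain K where "compact K" "0 < \<mu> K" "\<mu> K < \<infinity>"
      using prob by (rule borel_probability_om_ex_compact)
    with prob null show ?thesis
      by (auto simp: borel_probability_om_def)
  qed
  have P2_imp_P1: "?P1" if "?P2"
    using that by blast
  show ?thesis
  proof (intro conjI iffI)
    show "?P3" if "?P1"
      using P1_imp_P4[OF that] by (rule P4_imp_P3)
    show "?P1" if "?P4"
      using P4_imp_P3[OF that] by (rule P3_imp_P1)
  qed (fact P1_imp_P2 P2_imp_P1 P3_imp_P1 P1_imp_P4)+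
qed

end
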